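(* Let $\mathscr H$ be a complex Hilbert space and $\mathbf{X},\mathbf{Y},\mathbf{Z},\mathbf{W}\in\mathbb{B}(\mathscr H)^d$. Then $$w_e\left(\begin{bmatrix}\mathbf{X}&\mathbf{Y}\\\mathbf{Z}&\mathbf{W}\end{bmatrix}\right)\ge\max\Big\{w_e(\mathbf{X}),w_e(\mathbf{W}),w_e\Big(\tfrac{\mathbf{Y}+\mathbf{Z}}{2}\Big),w_e\Big(\tfrac{\mathbf{Y}-\mathbf{Z}}{2}\Big)\Big\}$$ and $$w_e\left(\begin{bmatrix}\mathbf{X}&\mathbf{Y}\\\mathbf{Z}&\mathbf{W}\end{bmatrix}\right)\le\max\{w_e(\mathbf{X}),w_e(\mathbf{W})\}+w_e\Big(\tfrac{\mathbf{Y}+\mathbf{Z}}{2}\Big)+w_e\Big(\tfrac{\mathbf{Y}-\mathbf{Z}}{2}\Big).$$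
   Context: $\mathbb{B}(\mathscr H)$ denotes the bounded linear operators on $\mathscr H$. $w_e(\mathbf{T})=\sup\{(\sum_{k}|\langle T_kx,x\rangle|^2)^{1/2}: \|x\|=1\}$ for $\mathbf{T}=(T_1,\dots,T_d)$. Tuple sums and scalar multiples are componentwise. For $d$-tuples, $\begin{bmatrix}\mathbf{X}&\mathbf{Y}\\\mathbf{Z}&\mathbf{W}\end{bmatrix}$ denotes the $d$-tuple $\left(\begin{bmatrix}X_k&Y_k\\Z_k&W_k\end{bmatrix}\right)_{k=1}^d$ of operators on $\mathscr H\oplus\mathscr H$. *)

theory Defs
  imports Complex_Main
begin

class complex_hilbert = ab_group_add +
  fixes scaleC :: "complex \<Rightarrow> 'a \<Rightarrow> 'a"
  fixes cinner :: "'a \<Rightarrow> 'a \<Rightarrow> complex"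
  assumes scaleC_add_right: "scaleC a (x + y) = scaleC a x + scaleC a y"
    and scaleC_add_left: "scaleC (a + b) x = scaleC a x + scaleC b x"
    and scaleC_scaleC: "scaleC a (scaleC b x) = scaleC (a * b) x"
    and scaleC_one: "scaleC 1 x = x"
    and cinner_commute: "cinner x y = cnj (cinner y x)"
    and cinner_add_left: "cinner (x + y) z = cinner x z + cinner y z"
    and cinner_scaleC_left: "cinner (scaleC a x) y = cnj a * cinner x y"
    and cinner_ge_zero: "0 \<le> Re (cinner x x)"
    and cinner_eq_zero_iff: "cinner x x = 0 \<longleftrightarrow> x = 0"
    and cinner_complete:
      "(\<forall>e>0. \<exists>N::nat. \<forall>m\<ge>N. \<forall>n\<ge>N. Re (cinner ((f::nat \<Rightarrow> 'a) m - f n) (f m - f n)) < e)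
        \<Longrightarrow> (\<exists>l. \<forall>e>0. \<exists>N::nat. \<forall>n\<ge>N. Re (cinner (f n - l) (f n - l)) < e)"

definition hnorm :: "'a::complex_hilbert \<Rightarrow> real" where
  "hnorm x = sqrt (Re (cinner x x))"

definition bounded_op :: "('a::complex_hilbert \<Rightarrow> 'a) \<Rightarrow> bool" where
  "bounded_op T \<longleftrightarrow> (\<forall>x y. T (x + y) = T x + T y)
     \<and> (\<forall>a x. T (scaleC a x) = scaleC a (T x))
     \<and> (\<exists>K. \<forall>x. hnorm (T x) \<le> K * hnorm x)"

text \<open>The 0 is adjoined only to fix the
  value of the supremum on the trivial space (all values are nonnegative).\<close>
definition joint_numrad :: "('b \<Rightarrow> 'b \<Rightarrow> complex) \<Rightarrow> nat \<Rightarrow> (nat \<Rightarrow> 'b \<Rightarrow> 'b) \<Rightarrow> real" where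
  "joint_numrad ip d T =
     Sup (insert 0 {sqrt (\<Sum>k<d. (cmod (ip (T k x) x))\<^sup>2) | x. ip x x = 1})"

definition w_e :: "nat \<Rightarrow> (nat \<Rightarrow> 'a::complex_hilbert \<Rightarrow> 'a) \<Rightarrow> real" where
  "w_e d T = joint_numrad cinner d T"

definition tadd :: "(nat \<Rightarrow> 'a::complex_hilbert \<Rightarrow> 'a) \<Rightarrow> (nat \<Rightarrow> 'a \<Rightarrow> 'a) \<Rightarrow> nat \<Rightarrow> 'a \<Rightarrow> 'a" where
  "tadd S T = (\<lambda>k x. S k x + T k x)"
definition tsub :: "(nat \<Rightarrow> 'a::complex_hilbert \<Rightarrow> 'a) \<Rightarrow> (nat \<Rightarrow> 'a \<Rightarrow> 'a) \<Rightarrow> nat \<Rightarrow> 'a \<Rightarrow> 'a" where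
  "tsub S T = (\<lambda>k x. S k x - T k x)"
definition tscale :: "complex \<Rightarrow> (nat \<Rightarrow> 'a::complex_hilbert \<Rightarrow> 'a) \<Rightarrow> nat \<Rightarrow> 'a \<Rightarrow> 'a" where
  "tscale c T = (\<lambda>k x. scaleC c (T k x))"

definition dsum_inner :: "'a::complex_hilbert \<times> 'a \<Rightarrow> 'a \<times> 'a \<Rightarrow> complex" where
  "dsum_inner p q = cinner (fst p) (fst q) + cinner (snd p) (snd q)"

definition blockop :: "(nat \<Rightarrow> 'a::complex_hilbert \<Rightarrow> 'a) \<Rightarrow> (nat \<Rightarrow> 'a \<Rightarrow> 'a) \<Rightarrow>
    (nat \<Rightarrow> 'a \<Rightarrow> 'a) \<Rightarrow> (nat \<Rightarrow> 'a \<Rightarrow> 'a) \<Rightarrow> nat \<Rightarrow> 'a \<times> 'a \<Rightarrow> 'a \<times> 'a" where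
  "blockop X Y Z W = (\<lambda>k p. (X k (fst p) + Y k (snd p), Z k (fst p) + W k (snd p)))"

definition w_e_block :: "nat \<Rightarrow> (nat \<Rightarrow> 'a::complex_hilbert \<Rightarrow> 'a) \<Rightarrow> (nat \<Rightarrow> 'a \<Rightarrow> 'a) \<Rightarrow>
    (nat \<Rightarrow> 'a \<Rightarrow> 'a) \<Rightarrow> (nat \<Rightarrow> 'a \<Rightarrow> 'a) \<Rightarrow> real" where
  "w_e_block d X Y Z W = joint_numrad dsum_inner d (blockop X Y Z W)"

end

theory Submission
  imports Defs "HOL-Analysis.L2_Norm"
begin

text \<open>Lower bound: at the unit vectors \<open>(x, 0)\<close>, \<open>(0, x)\<close>, \<open>(x, \<plusminus>x)/\<surd>2\<close> and
  \<open>(x, \<plusminus>\<i>x)/\<surd>2\<close> of \<open>H \<oplus> H\<close>, the form of the block tuple (or half the difference of two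
  such values) reproduces the form of \<open>X\<close>, \<open>W\<close>, \<open>(Y+Z)/2\<close> and \<open>(Y-Z)/2\<close> at \<open>x\<close>.
  Upper bound: the off-diagonal part \<open>\<langle>Yy,x\<rangle> + \<langle>Zx,y\<rangle>\<close> of the block form at \<open>(x,y)\<close> is,
  by polarization, a combination of the forms of \<open>(Y+Z)/2\<close> at \<open>x\<plusminus>y\<close> and of \<open>(Y-Z)/2\<close>
  at \<open>x\<plusminus>\<i>y\<close>. By homogeneity each is bounded by the squared norm of the vector times the
  radius, and the parallelogram law sums those squared norms to \<open>2(\<parallel>x\<parallel>\<^sup>2 + \<parallel>y\<parallel>\<^sup>2) = 2\<close>.\<close>

lemma scaleC_zero_right [simp]: "scaleC a (0::'a::complex_hilbert) = 0"
  using scaleC_add_right[of a 0 0] by simp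

lemma scaleC_minus_right: "scaleC a (- x::'a::complex_hilbert) = - scaleC a x"
  using scaleC_add_right[of a x "-x"] by (simp add: add_eq_0_iff)

lemma scaleC_diff_right: "scaleC a (x - y::'a::complex_hilbert) = scaleC a x - scaleC a y"
  using scaleC_add_right[of a x "-y"] by (simp add: scaleC_minus_right)

lemma cinner_add_right: "cinner (x::'a::complex_hilbert) (y + z) = cinner x y + cinner x z"
  by (metis cinner_commute cinner_add_left complex_cnj_add)

lemma cinner_scaleC_right: "cinner (x::'a::complex_hilbert) (scaleC a y) = a * cinner x y"
  by (metis cinner_commute cinner_scaleC_left complex_cnj_mult complex_cnj_cnj)

lemma cinner_zero_left [simp]: "cinner (0::'a::complex_hilbert) y = 0"
  using cinner_add_left[of "0::'a" 0 y] by simp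

lemma cinner_zero_right [simp]: "cinner (x::'a::complex_hilbert) 0 = 0"
  by (metis cinner_commute cinner_zero_left complex_cnj_zero)

lemma cinner_minus_left: "cinner (- x::'a::complex_hilbert) y = - cinner x y"
  using cinner_add_left[of x "-x" y] by (simp add: add_eq_0_iff)

lemma cinner_minus_right: "cinner (x::'a::complex_hilbert) (- y) = - cinner x y"
  by (metis cinner_commute cinner_minus_left complex_cnj_minus)

lemma cinner_diff_left: "cinner (x - y::'a::complex_hilbert) z = cinner x z - cinner y z"
  using cinner_add_left[of x "-y" z] by (simp add: cinner_minus_left)

lemma cinner_diff_right: "cinner (x::'a::complex_hilbert) (y - z) = cinner x y - cinner x z"
  using cinner_add_right[of x y "-z"] by (simp add: cinner_minus_right)

lemmas cinner_simps = cinner_add_left cinner_add_right cinner_scaleC_left cinner_scaleC_right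
  cinner_diff_left cinner_diff_right cinner_minus_left cinner_minus_right

lemma cinner_self_eq_Re: "cinner (x::'a::complex_hilbert) x = complex_of_real (Re (cinner x x))"
proof -
  have "cinner x x = cnj (cinner x x)" by (rule cinner_commute)
  then show ?thesis by (metis Reals_cnj_iff complex_is_Real_iff of_real_Re)
qed

lemma cinner_parallelogram:
  fixes x y :: "'a::complex_hilbert"
  shows "Re (cinner (x + y) (x + y)) + Re (cinner (x - y) (x - y))
           = 2 * (Re (cinner x x) + Re (cinner y y))"
proof -
  have "cinner (x + y) (x + y) + cinner (x - y) (x - y) = 2 * (cinner x x + cinner y y)"
    by (simp add: cinner_simps algebra_simps)
  then show ?thesis by (metis Re_complex_of_real mult_2 plus_complex.sel(1))
qed

lemma two_cmod_cinner_le: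
  fixes x y :: "'a::complex_hilbert"
  shows "2 * cmod (cinner y x) \<le> Re (cinner y y) + Re (cinner x x)"
proof -
  define \<alpha> where "\<alpha> = cinner y x"
  define a where "a = sgn \<alpha>"
  have a_phase: "cnj a * \<alpha> = cmod \<alpha>"
  proof (cases "\<alpha> = 0")
    case False
    have "cnj a * \<alpha> = (\<alpha> * cnj \<alpha>) / complex_of_real (cmod \<alpha>)"
      by (simp add: a_def sgn_div_norm divide_inverse mult.commute mult.left_commute scaleR_conv_of_real)
    also have "\<alpha> * cnj \<alpha> = complex_of_real (cmod \<alpha> ^ 2)"
      using complex_norm_square[of \<alpha>] by simp
    finally show ?thesis using False by (simp add: power2_eq_square)
  qed (simp add: a_def)
  have a_sq: "cnj a * a = complex_of_real ((cmod a)\<^sup>2)" "(cmod a)\<^sup>2 \<le> 1"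
    using complex_norm_square[of a] by (simp_all add: mult.commute a_def norm_sgn power_le_one)
  \<comment> \<open>expand \<open>0 \<le> \<parallel>a y - x\<parallel>\<^sup>2\<close>, where \<open>a\<close> is the phase of \<open>\<langle>y,x\<rangle>\<close>\<close>
  have "0 \<le> Re (cinner (scaleC a y - x) (scaleC a y - x))" by (rule cinner_ge_zero)
  also have "cinner (scaleC a y - x) (scaleC a y - x)
     = cnj a * a * cinner y y - cnj a * \<alpha> - a * cinner x y + cinner x x"
    by (simp add: cinner_simps \<alpha>_def algebra_simps)
  also have "a * cinner x y = cnj (cnj a * \<alpha>)"
    by (simp add: \<alpha>_def cinner_commute[of x y])
  finally have "0 \<le> (cmod a)\<^sup>2 * Re (cinner y y) - 2 * cmod \<alpha> + Re (cinner x x)"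
    by (simp add: a_phase a_sq(1))
  moreover have "(cmod a)\<^sup>2 * Re (cinner y y) \<le> Re (cinner y y)"
    using a_sq(2) cinner_ge_zero[of y] by (simp add: mult_left_le_one_le)
  ultimately show ?thesis by (simp add: \<alpha>_def)
qed

lemma bounded_op_linear:
  assumes "bounded_op T"
  shows "T (x + y) = T x + T y" "T (scaleC a x) = scaleC a (T x)"
    "T (- x) = - T x" "T (x - y) = T x - T y" "T 0 = 0"
proof -
  show add: "T (x + y) = T x + T y" for x y using assms unfolding bounded_op_def by blast
  show "T (scaleC a x) = scaleC a (T x)" using assms unfolding bounded_op_def by blast
  show zero: "T 0 = 0" using add[of 0 0] by simp
  show minus: "T (- x) = - T x" for x using add[of x "-x"] zero by (simp add: add_eq_0_iff)
  show "T (x - y) = T x - T y" using add[of x "-y"] minus by simp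
qed

lemma bounded_op_cinner_bound:
  assumes "bounded_op (T::'a::complex_hilbert \<Rightarrow> 'a)"
  obtains B where "\<And>x y. Re (cinner x x) \<le> 1 \<Longrightarrow> Re (cinner y y) \<le> 1 \<Longrightarrow> cmod (cinner (T y) x) \<le> B"
proof -
  obtain K where K: "\<And>y. hnorm (T y) \<le> K * hnorm y"
    using assms unfolding bounded_op_def by blast
  have "cmod (cinner (T y) x) \<le> (K\<^sup>2 + 1) / 2"
    if x: "Re (cinner x x) \<le> 1" and y: "Re (cinner y y) \<le> 1" for x y
  proof -
    have "(hnorm (T y))\<^sup>2 \<le> (K * hnorm y)\<^sup>2"
      using K[of y] cinner_ge_zero[of "T y"] by (intro power_mono) (simp_all add: hnorm_def)
    also have "\<dots> \<le> K\<^sup>2"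
      using y cinner_ge_zero[of y] by (simp add: hnorm_def power_mult_distrib mult_left_le)
    finally have "Re (cinner (T y) (T y)) \<le> K\<^sup>2"
      using cinner_ge_zero[of "T y"] by (simp add: hnorm_def)
    then show ?thesis using two_cmod_cinner_le[of "T y" x] x by simp
  qed
  then show ?thesis by (rule that)
qed

section \<open>The joint numerical radius of a tuple\<close>

definition tuple_norm :: "nat \<Rightarrow> (nat \<Rightarrow> complex) \<Rightarrow> real" where
  "tuple_norm d f = L2_set (\<lambda>k. cmod (f k)) {..<d}"

lemma tuple_norm_cong: "(\<And>k. k < d \<Longrightarrow> f k = g k) \<Longrightarrow> tuple_norm d f = tuple_norm d g"
  unfolding tuple_norm_def by (rule L2_set_cong) auto

lemma tuple_norm_add: "tuple_norm d (\<lambda>k. f k + g k) \<le> tuple_norm d f + tuple_norm d g"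
proof -
  have "tuple_norm d (\<lambda>k. f k + g k) \<le> L2_set (\<lambda>k. cmod (f k) + cmod (g k)) {..<d}"
    unfolding tuple_norm_def by (rule L2_set_mono) (auto simp: norm_triangle_ineq)
  also have "\<dots> \<le> tuple_norm d f + tuple_norm d g"
    unfolding tuple_norm_def by (rule L2_set_triangle_ineq)
  finally show ?thesis .
qed

lemma tuple_norm_scale: "tuple_norm d (\<lambda>k. c * f k) = cmod c * tuple_norm d f"
  unfolding tuple_norm_def by (simp add: L2_set_right_distrib norm_mult)

lemma tuple_norm_le_sum: "tuple_norm d f \<le> (\<Sum>k<d. cmod (f k))"
  unfolding tuple_norm_def by (rule L2_set_le_sum) simp

definition numrange_norms :: "('b \<Rightarrow> 'b \<Rightarrow> complex) \<Rightarrow> nat \<Rightarrow> (nat \<Rightarrow> 'b \<Rightarrow> 'b) \<Rightarrow> real set" where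
  "numrange_norms ip d T = insert 0 {tuple_norm d (\<lambda>k. ip (T k x) x) | x. ip x x = 1}"

lemma joint_numrad_eq_Sup: "joint_numrad ip d T = Sup (numrange_norms ip d T)"
  unfolding joint_numrad_def numrange_norms_def tuple_norm_def L2_set_def by simp

text \<open>Without boundedness the supremum defining the joint numerical radius is junk.\<close>
definition bounded_forms :: "('b \<Rightarrow> 'b \<Rightarrow> complex) \<Rightarrow> nat \<Rightarrow> (nat \<Rightarrow> 'b \<Rightarrow> 'b) \<Rightarrow> bool" where
  "bounded_forms ip d T \<longleftrightarrow> (\<forall>k<d. \<exists>B. \<forall>x. ip x x = 1 \<longrightarrow> cmod (ip (T k x) x) \<le> B)"

lemma bdd_above_numrange_norms:
  assumes "bounded_forms ip d T"
  shows "bdd_above (numrange_norms ip d T)"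
proof -
  obtain B where B: "\<And>k x. k < d \<Longrightarrow> ip x x = 1 \<Longrightarrow> cmod (ip (T k x) x) \<le> B k"
    using assms unfolding bounded_forms_def by metis
  have "t \<le> (\<Sum>k<d. \<bar>B k\<bar>)" if "t \<in> numrange_norms ip d T" for t
  proof -
    have "tuple_norm d (\<lambda>k. ip (T k x) x) \<le> (\<Sum>k<d. \<bar>B k\<bar>)" if "ip x x = 1" for x
    proof -
      have "(\<Sum>k<d. cmod (ip (T k x) x)) \<le> (\<Sum>k<d. \<bar>B k\<bar>)"
        by (intro sum_mono) (use B[OF _ that] in force)
      then show ?thesis by (rule order_trans[OF tuple_norm_le_sum])
    qed
    then show ?thesis using \<open>t \<in> _\<close> by (auto simp: numrange_norms_def sum_nonneg)
  qed
  then show ?thesis by (rule bdd_aboveI)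
qed

lemma joint_numrad_upper:
  assumes "bounded_forms ip d T" and "ip x x = 1"
  shows "tuple_norm d (\<lambda>k. ip (T k x) x) \<le> joint_numrad ip d T"
proof -
  have "tuple_norm d (\<lambda>k. ip (T k x) x) \<in> numrange_norms ip d T"
    using assms(2) by (auto simp: numrange_norms_def)
  then show ?thesis
    unfolding joint_numrad_eq_Sup using bdd_above_numrange_norms[OF assms(1)] by (rule cSup_upper)
qed

lemma joint_numrad_nonneg:
  assumes "bounded_forms ip d T"
  shows "0 \<le> joint_numrad ip d T"
  unfolding joint_numrad_eq_Sup using bdd_above_numrange_norms[OF assms]
  by (intro cSup_upper) (simp_all add: numrange_norms_def)

lemma joint_numrad_least:
  "(\<And>x. ip x x = 1 \<Longrightarrow> tuple_norm d (\<lambda>k. ip (T k x) x) \<le> M) \<Longrightarrow> 0 \<le> M \<Longrightarrow> joint_numrad ip d T \<le> M"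
  unfolding joint_numrad_eq_Sup by (rule cSup_least) (auto simp: numrange_norms_def)

lemma joint_numrad_le_by_two_forms:
  assumes bounded: "bounded_forms ip' d T'"
    and coeffs: "cmod a + cmod b \<le> 1"
    and repr: "\<And>x. ip x x = 1 \<Longrightarrow> \<exists>p q. ip' p p = 1 \<and> ip' q q = 1 \<and>
                 (\<forall>k<d. ip (T k x) x = a * ip' (T' k p) p + b * ip' (T' k q) q)"
  shows "joint_numrad ip d T \<le> joint_numrad ip' d T'"
proof (rule joint_numrad_least)
  let ?J = "joint_numrad ip' d T'"
  show J_nonneg: "0 \<le> ?J" using bounded by (rule joint_numrad_nonneg)
  fix x assume "ip x x = 1"
  then obtain p q where p: "ip' p p = 1" and q: "ip' q q = 1"
    and pq: "\<And>k. k < d \<Longrightarrow> ip (T k x) x = a * ip' (T' k p) p + b * ip' (T' k q) q"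
    using repr by blast
  have "tuple_norm d (\<lambda>k. ip (T k x) x) = tuple_norm d (\<lambda>k. a * ip' (T' k p) p + b * ip' (T' k q) q)"
    by (rule tuple_norm_cong) (rule pq)
  also have "\<dots> \<le> cmod a * tuple_norm d (\<lambda>k. ip' (T' k p) p) + cmod b * tuple_norm d (\<lambda>k. ip' (T' k q) q)"
    using tuple_norm_add by (metis tuple_norm_scale)
  also have "\<dots> \<le> cmod a * ?J + cmod b * ?J"
    by (intro add_mono mult_left_mono joint_numrad_upper[OF bounded] p q) simp_all
  also have "\<dots> \<le> ?J"
    using coeffs J_nonneg by (metis distrib_right mult_1 mult_right_mono)
  finally show "tuple_norm d (\<lambda>k. ip (T k x) x) \<le> ?J" .
qed

lemma tuple_norm_cinner_le_w_e:
  fixes T :: "nat \<Rightarrow> 'a::complex_hilbert \<Rightarrow> 'a"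
  assumes homogeneous: "\<And>k a z. k < d \<Longrightarrow> T k (scaleC a z) = scaleC a (T k z)"
    and bounded: "bounded_forms cinner d T"
  shows "tuple_norm d (\<lambda>k. cinner (T k z) z) \<le> Re (cinner z z) * w_e d T"
proof (cases "z = 0")
  case True
  then show ?thesis by (simp add: tuple_norm_def L2_set_0')
next
  case False
  define r where "r = Re (cinner z z)"
  have z_r: "cinner z z = complex_of_real r"
    unfolding r_def by (rule cinner_self_eq_Re)
  with False have "r \<noteq> 0"
    using cinner_eq_zero_iff[of z] by auto
  then have "r > 0"
    using cinner_ge_zero[of z] r_def by linarith
  define s where "s = complex_of_real (1 / sqrt r)"
  have s_sq: "cnj s * s = complex_of_real (1 / r)"
  proof -
    have "1 / sqrt r * (1 / sqrt r) = 1 / r"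
      using \<open>r > 0\<close> by simp
    then show ?thesis by (metis s_def complex_cnj_complex_of_real of_real_mult)
  qed
  have "cinner (scaleC s z) (scaleC s z) = 1"
  proof -
    have "cinner (scaleC s z) (scaleC s z) = (cnj s * s) * cinner z z"
      by (simp add: cinner_simps)
    then show ?thesis using \<open>r > 0\<close> by (simp add: s_sq z_r flip: of_real_mult)
  qed
  then have "tuple_norm d (\<lambda>k. cinner (T k (scaleC s z)) (scaleC s z)) \<le> w_e d T"
    unfolding w_e_def by (rule joint_numrad_upper[OF bounded])
  also have "tuple_norm d (\<lambda>k. cinner (T k (scaleC s z)) (scaleC s z))
      = tuple_norm d (\<lambda>k. complex_of_real (1 / r) * cinner (T k z) z)"
    by (rule tuple_norm_cong) (simp add: homogeneous cinner_simps mult.assoc[symmetric] s_sq mult.commute[of s])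
  also have "\<dots> = tuple_norm d (\<lambda>k. cinner (T k z) z) / r"
    using tuple_norm_scale[of d "complex_of_real (1 / r)" "\<lambda>k. cinner (T k z) z"] \<open>r > 0\<close> by (simp add: norm_divide)
  finally show ?thesis using \<open>r > 0\<close> by (simp add: r_def field_simps)
qed

lemma bounded_forms_bounded_op:
  assumes "\<And>k. k < d \<Longrightarrow> bounded_op (T k)"
  shows "bounded_forms cinner d (T :: nat \<Rightarrow> 'a::complex_hilbert \<Rightarrow> 'a)"
  unfolding bounded_forms_def
proof (intro allI impI)
  fix k assume "k < d"
  then obtain B where "\<And>x y. Re (cinner x x) \<le> 1 \<Longrightarrow> Re (cinner y y) \<le> 1 \<Longrightarrow> cmod (cinner (T k y) x) \<le> B"
    using assms bounded_op_cinner_bound by metis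
  then show "\<exists>B. \<forall>x. cinner x x = 1 \<longrightarrow> cmod (cinner (T k x) x) \<le> B" by force
qed

lemma bounded_forms_half_sum:
  assumes "bounded_forms cinner d S" and "bounded_forms cinner d (T :: nat \<Rightarrow> 'a::complex_hilbert \<Rightarrow> 'a)"
  shows "bounded_forms cinner d (tscale (1/2) (tadd S T))" "bounded_forms cinner d (tscale (1/2) (tsub S T))"
proof -
  have "\<exists>B. \<forall>x. cinner x x = 1 \<longrightarrow> cmod ((cinner (S k x) x + s * cinner (T k x) x) / 2) \<le> B"
    if "k < d" and s: "cmod s = 1" for k s
  proof -
    obtain B1 B2 where B1: "\<And>x. cinner x x = 1 \<Longrightarrow> cmod (cinner (S k x) x) \<le> B1"
      and B2: "\<And>x. cinner x x = 1 \<Longrightarrow> cmod (cinner (T k x) x) \<le> B2"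
      using assms \<open>k < d\<close> unfolding bounded_forms_def by metis
    have "cmod ((cinner (S k x) x + s * cinner (T k x) x) / 2) \<le> (B1 + B2) / 2"
      if "cinner x x = 1" for x
    proof -
      have "cmod (cinner (S k x) x + s * cinner (T k x) x) \<le> cmod (cinner (S k x) x) + cmod (cinner (T k x) x)"
        using norm_triangle_ineq[of "cinner (S k x) x" "s * cinner (T k x) x"] s by (simp add: norm_mult)
      also have "\<dots> \<le> B1 + B2"
        using B1[OF that] B2[OF that] by (rule add_mono)
      finally show ?thesis by (simp add: norm_divide)
    qed
    then show ?thesis by blast
  qed
  from this[of _ 1] this[of _ "-1"] show
    "bounded_forms cinner d (tscale (1/2) (tadd S T))" "bounded_forms cinner d (tscale (1/2) (tsub S T))"
    by (simp_all add: bounded_forms_def tscale_def tadd_def tsub_def cinner_simps)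
qed

lemma bounded_forms_blockop:
  fixes X Y Z W :: "nat \<Rightarrow> 'a::complex_hilbert \<Rightarrow> 'a"
  assumes "\<And>k. k < d \<Longrightarrow> bounded_op (X k) \<and> bounded_op (Y k) \<and> bounded_op (Z k) \<and> bounded_op (W k)"
  shows "bounded_forms dsum_inner d (blockop X Y Z W)"
  unfolding bounded_forms_def
proof (intro allI impI)
  fix k assume "k < d"
  have bounded: "bounded_op (X k)" "bounded_op (Y k)" "bounded_op (Z k)" "bounded_op (W k)"
    using assms[OF \<open>k < d\<close>] by simp_all
  obtain B1 where B1: "\<And>x y. Re (cinner x x) \<le> 1 \<Longrightarrow> Re (cinner y y) \<le> 1 \<Longrightarrow> cmod (cinner (X k y) x) \<le> B1"
    using bounded_op_cinner_bound[OF bounded(1)] by blast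
  obtain B2 where B2: "\<And>x y. Re (cinner x x) \<le> 1 \<Longrightarrow> Re (cinner y y) \<le> 1 \<Longrightarrow> cmod (cinner (Y k y) x) \<le> B2"
    using bounded_op_cinner_bound[OF bounded(2)] by blast
  obtain B3 where B3: "\<And>x y. Re (cinner x x) \<le> 1 \<Longrightarrow> Re (cinner y y) \<le> 1 \<Longrightarrow> cmod (cinner (Z k y) x) \<le> B3"
    using bounded_op_cinner_bound[OF bounded(3)] by blast
  obtain B4 where B4: "\<And>x y. Re (cinner x x) \<le> 1 \<Longrightarrow> Re (cinner y y) \<le> 1 \<Longrightarrow> cmod (cinner (W k y) x) \<le> B4"
    using bounded_op_cinner_bound[OF bounded(4)] by blast
  have "cmod (dsum_inner (blockop X Y Z W k p) p) \<le> B1 + B2 + B3 + B4" if "dsum_inner p p = 1" for p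
  proof -
    obtain x y where p: "p = (x, y)" by fastforce
    with that have "Re (cinner x x) + Re (cinner y y) = 1"
      by (simp add: dsum_inner_def complex_eq_iff)
    then have "Re (cinner x x) \<le> 1" "Re (cinner y y) \<le> 1"
      using cinner_ge_zero[of x] cinner_ge_zero[of y] by linarith+
    then have "cmod (cinner (X k x) x + cinner (Y k y) x + (cinner (Z k x) y + cinner (W k y) y))
        \<le> B1 + B2 + (B3 + B4)"
      by (intro norm_triangle_le add_mono B1 B2 B3 B4)
    then show ?thesis by (simp add: p dsum_inner_def blockop_def cinner_add_left add.assoc)
  qed
  then show "\<exists>B. \<forall>p. dsum_inner p p = 1 \<longrightarrow> cmod (dsum_inner (blockop X Y Z W k p) p) \<le> B"
    by blast
qed

lemma tuple_norm_form_diff_le: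
  fixes T :: "nat \<Rightarrow> 'a::complex_hilbert \<Rightarrow> 'a"
  assumes homogeneous: "\<And>k a z. k < d \<Longrightarrow> T k (scaleC a z) = scaleC a (T k z)"
    and bounded: "bounded_forms cinner d T"
  shows "tuple_norm d (\<lambda>k. c * (cinner (T k u) u - cinner (T k v) v))
           \<le> cmod c * ((Re (cinner u u) + Re (cinner v v)) * w_e d T)"
proof -
  have "tuple_norm d (\<lambda>k. cinner (T k u) u - cinner (T k v) v)
      \<le> tuple_norm d (\<lambda>k. cinner (T k u) u) + tuple_norm d (\<lambda>k. cinner (T k v) v)"
    using tuple_norm_add[of d "\<lambda>k. cinner (T k u) u" "\<lambda>k. - cinner (T k v) v"]
      tuple_norm_scale[of d "-1" "\<lambda>k. cinner (T k v) v"] by simp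
  also have "\<dots> \<le> (Re (cinner u u) + Re (cinner v v)) * w_e d T"
    using tuple_norm_cinner_le_w_e[OF homogeneous bounded, where z = u]
      tuple_norm_cinner_le_w_e[OF homogeneous bounded, where z = v]
    by (simp add: distrib_right add_mono)
  finally show ?thesis
    by (simp add: tuple_norm_scale mult_left_mono)
qed

lemma dsum_inner_blockop:
  "dsum_inner (blockop X Y Z W k (x, y)) (x, y)
     = cinner (X k x) x + cinner (Y k y) x + cinner (Z k x) y + cinner (W k y) y"
  by (simp add: dsum_inner_def blockop_def cinner_add_left)

section \<open>Block tuples of bounded operators\<close>

locale bounded_block =
  fixes d :: nat and X Y Z W :: "nat \<Rightarrow> 'a::complex_hilbert \<Rightarrow> 'a"
  assumes bounded_X: "k < d \<Longrightarrow> bounded_op (X k)" and bounded_Y: "k < d \<Longrightarrow> bounded_op (Y k)"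
    and bounded_Z: "k < d \<Longrightarrow> bounded_op (Z k)" and bounded_W: "k < d \<Longrightarrow> bounded_op (W k)"
begin

abbreviation half_sum where "half_sum \<equiv> tscale (1/2) (tadd Y Z)"
abbreviation half_diff where "half_diff \<equiv> tscale (1/2) (tsub Y Z)"

lemmas linear_simps = bounded_op_linear[OF bounded_X] bounded_op_linear[OF bounded_Y]
  bounded_op_linear[OF bounded_Z] bounded_op_linear[OF bounded_W]

lemma bounded_forms_of_tuples:
  "bounded_forms cinner d X" "bounded_forms cinner d W"
  "bounded_forms cinner d half_sum" "bounded_forms cinner d half_diff"
  "bounded_forms dsum_inner d (blockop X Y Z W)"
proof -
  show "bounded_forms cinner d X" using bounded_X by (rule bounded_forms_bounded_op)
  show "bounded_forms cinner d W" using bounded_W by (rule bounded_forms_bounded_op)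
  have "bounded_forms cinner d Y" using bounded_Y by (rule bounded_forms_bounded_op)
  moreover have "bounded_forms cinner d Z" using bounded_Z by (rule bounded_forms_bounded_op)
  ultimately show "bounded_forms cinner d half_sum" "bounded_forms cinner d half_diff"
    by (rule bounded_forms_half_sum)+
  show "bounded_forms dsum_inner d (blockop X Y Z W)"
    by (rule bounded_forms_blockop) (simp add: bounded_X bounded_Y bounded_Z bounded_W)
qed

lemma homogeneous:
  assumes "k < d"
  shows "X k (scaleC a z) = scaleC a (X k z)" "W k (scaleC a z) = scaleC a (W k z)"
    "half_sum k (scaleC a z) = scaleC a (half_sum k z)"
    "half_diff k (scaleC a z) = scaleC a (half_diff k z)"
  using assms by (simp_all add: linear_simps tscale_def tadd_def tsub_def
      scaleC_add_right scaleC_diff_right scaleC_scaleC mult.commute)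

lemma block_form_scaled:
  assumes "k < d"
  shows "dsum_inner (blockop X Y Z W k (scaleC a x, scaleC b x)) (scaleC a x, scaleC b x)
    = cnj a * a * cinner (X k x) x + cnj b * a * cinner (Y k x) x
      + cnj a * b * cinner (Z k x) x + cnj b * b * cinner (W k x) x"
  using assms by (simp add: dsum_inner_blockop linear_simps cinner_simps mult.assoc)

lemma block_form_antisymmetrized:
  assumes "k < d" and a: "cnj a * a = 1/2"
  shows "dsum_inner (blockop X Y Z W k (scaleC a x, scaleC (\<sigma> * a) x)) (scaleC a x, scaleC (\<sigma> * a) x)
       - dsum_inner (blockop X Y Z W k (scaleC a x, scaleC (- \<sigma> * a) x)) (scaleC a x, scaleC (- \<sigma> * a) x)
     = cnj \<sigma> * cinner (Y k x) x + \<sigma> * cinner (Z k x) x"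
proof -
  have coeffs: "cnj (\<sigma> * a) * a = cnj \<sigma> / 2" "cnj (- \<sigma> * a) * a = - cnj \<sigma> / 2"
      "cnj a * (\<sigma> * a) = \<sigma> / 2" "cnj a * (- \<sigma> * a) = - \<sigma> / 2"
      "cnj (- \<sigma> * a) * (- \<sigma> * a) = cnj (\<sigma> * a) * (\<sigma> * a)"
    using a by (simp_all add: mult.assoc mult.left_commute[of "cnj a"])
  show ?thesis
    unfolding block_form_scaled[OF \<open>k < d\<close>] coeffs by (simp add: algebra_simps)
qed

lemma w_e_le_w_e_block:
  "w_e d X \<le> w_e_block d X Y Z W" "w_e d W \<le> w_e_block d X Y Z W"
  "w_e d half_sum \<le> w_e_block d X Y Z W" "w_e d half_diff \<le> w_e_block d X Y Z W"
proof -
  let ?B = "\<lambda>k p. dsum_inner (blockop X Y Z W k p) p"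
  have by_block_forms: "w_e d T \<le> w_e_block d X Y Z W"
    if "cmod \<alpha> + cmod \<beta> \<le> 1"
      and "\<And>x. cinner x x = 1 \<Longrightarrow> \<exists>p q. dsum_inner p p = 1 \<and> dsum_inner q q = 1 \<and>
             (\<forall>k<d. cinner (T k x) x = \<alpha> * ?B k p + \<beta> * ?B k q)"
    for T \<alpha> \<beta>
    unfolding w_e_def w_e_block_def using bounded_forms_of_tuples(5) that by (rule joint_numrad_le_by_two_forms)
  define c where "c = complex_of_real (sqrt (1/2))"
  have c: "cnj c * c = 1/2"
    unfolding c_def by (simp flip: of_real_mult)
  \<comment> \<open>\<open>(x, \<plusminus>\<sigma>x)/\<surd>2\<close> with \<open>\<sigma> = 1\<close> resp. \<open>\<sigma> = \<i>\<close> isolates \<open>(Y+Z)/2\<close> resp. \<open>(Y-Z)/2\<close>\<close>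
  define v where "v \<sigma> x = (scaleC c x, scaleC (\<sigma> * c) x)" for \<sigma> and x :: 'a
  have v_unit: "dsum_inner (v \<sigma> x) (v \<sigma> x) = 1" if "cinner x x = 1" "cnj \<sigma> * \<sigma> = 1" for \<sigma> x
  proof -
    have \<sigma>c: "cnj (\<sigma> * c) * (\<sigma> * c) = 1/2"
      using that(2) c by (simp add: mult.assoc mult.left_commute[of "cnj c"])
    have "dsum_inner (v \<sigma> x) (v \<sigma> x) = cnj c * c * cinner x x + cnj (\<sigma> * c) * (\<sigma> * c) * cinner x x"
      by (simp add: v_def dsum_inner_def cinner_simps mult.assoc)
    also have "\<dots> = 1"
      unfolding c \<sigma>c that(1) by simp
    finally show ?thesis .
  qed
  have v_diff: "?B k (v \<sigma> x) - ?B k (v (-\<sigma>) x) = cnj \<sigma> * cinner (Y k x) x + \<sigma> * cinner (Z k x) x"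
    if "k < d" for k \<sigma> x
    unfolding v_def using that c by (rule block_form_antisymmetrized)
  show "w_e d X \<le> w_e_block d X Y Z W"
  proof (rule by_block_forms[of 1 0])
    fix x :: 'a assume "cinner x x = 1"
    then show "\<exists>p q. dsum_inner p p = 1 \<and> dsum_inner q q = 1 \<and>
        (\<forall>k<d. cinner (X k x) x = 1 * ?B k p + 0 * ?B k q)"
      by (intro exI[of _ "(x, 0)"] conjI) (simp_all add: dsum_inner_def blockop_def linear_simps)
  qed simp
  show "w_e d W \<le> w_e_block d X Y Z W"
  proof (rule by_block_forms[of 1 0])
    fix x :: 'a assume "cinner x x = 1"
    then show "\<exists>p q. dsum_inner p p = 1 \<and> dsum_inner q q = 1 \<and>
        (\<forall>k<d. cinner (W k x) x = 1 * ?B k p + 0 * ?B k q)"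
      by (intro exI[of _ "(0, x)"] conjI) (simp_all add: dsum_inner_def blockop_def linear_simps)
  qed simp
  show "w_e d half_sum \<le> w_e_block d X Y Z W"
  proof (rule by_block_forms[of "1/2" "-1/2"])
    fix x :: 'a assume x: "cinner x x = 1"
    have form: "cinner (half_sum k x) x = 1/2 * ?B k (v 1 x) + -1/2 * ?B k (v (-1) x)" if "k < d" for k
    proof -
      have "1/2 * ?B k (v 1 x) + -1/2 * ?B k (v (-1) x) = 1/2 * (?B k (v 1 x) - ?B k (v (-1) x))"
        by (simp add: algebra_simps)
      also have "\<dots> = 1/2 * (cnj 1 * cinner (Y k x) x + 1 * cinner (Z k x) x)"
        by (simp only: v_diff[OF that])
      also have "\<dots> = cinner (half_sum k x) x"
        by (simp add: tscale_def tadd_def cinner_simps algebra_simps)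
      finally show ?thesis by (rule sym)
    qed
    show "\<exists>p q. dsum_inner p p = 1 \<and> dsum_inner q q = 1 \<and>
        (\<forall>k<d. cinner (half_sum k x) x = 1/2 * ?B k p + -1/2 * ?B k q)"
      by (rule exI[of _ "v 1 x"], rule exI[of _ "v (-1) x"]) (simp add: v_unit x form)
  qed simp
  show "w_e d half_diff \<le> w_e_block d X Y Z W"
  proof (rule by_block_forms[of "\<i>/2" "-\<i>/2"])
    fix x :: 'a assume x: "cinner x x = 1"
    have form: "cinner (half_diff k x) x = \<i>/2 * ?B k (v \<i> x) + -\<i>/2 * ?B k (v (-\<i>) x)" if "k < d" for k
    proof -
      have "\<i>/2 * ?B k (v \<i> x) + -\<i>/2 * ?B k (v (-\<i>) x) = \<i>/2 * (?B k (v \<i> x) - ?B k (v (-\<i>) x))"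
        by (simp add: algebra_simps)
      also have "\<dots> = \<i>/2 * (cnj \<i> * cinner (Y k x) x + \<i> * cinner (Z k x) x)"
        by (simp only: v_diff[OF that])
      also have "\<dots> = cinner (half_diff k x) x"
        by (simp add: tscale_def tsub_def cinner_simps algebra_simps)
      finally show ?thesis by (rule sym)
    qed
    show "\<exists>p q. dsum_inner p p = 1 \<and> dsum_inner q q = 1 \<and>
        (\<forall>k<d. cinner (half_diff k x) x = \<i>/2 * ?B k p + -\<i>/2 * ?B k q)"
      by (rule exI[of _ "v \<i> x"], rule exI[of _ "v (-\<i>) x"]) (simp add: v_unit x form)
  qed (simp add: norm_divide)
qed
lemma off_diagonal_polarization:
  assumes "k < d"
  shows "cinner (Y k y) x + cinner (Z k x) y
    = 1/2 * (cinner (half_sum k (x + y)) (x + y) - cinner (half_sum k (x - y)) (x - y))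
      + \<i>/2 * (cinner (half_diff k (x + scaleC \<i> y)) (x + scaleC \<i> y)
               - cinner (half_diff k (x - scaleC \<i> y)) (x - scaleC \<i> y))"
  using assms by (simp add: tscale_def tadd_def tsub_def linear_simps cinner_simps
      scaleC_add_right scaleC_diff_right algebra_simps)

lemma block_form_polarization:
  assumes "k < d"
  shows "dsum_inner (blockop X Y Z W k (x, y)) (x, y) = (cinner (X k x) x + cinner (W k y) y)
    + (1/2 * (cinner (half_sum k (x + y)) (x + y) - cinner (half_sum k (x - y)) (x - y))
       + \<i>/2 * (cinner (half_diff k (x + scaleC \<i> y)) (x + scaleC \<i> y)
                - cinner (half_diff k (x - scaleC \<i> y)) (x - scaleC \<i> y)))"
proof -
  have "dsum_inner (blockop X Y Z W k (x, y)) (x, y)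
      = (cinner (X k x) x + cinner (W k y) y) + (cinner (Y k y) x + cinner (Z k x) y)"
    by (simp add: dsum_inner_blockop algebra_simps)
  then show ?thesis by (simp only: off_diagonal_polarization[OF assms])
qed

lemma diagonal_forms_le:
  "tuple_norm d (\<lambda>k. cinner (X k x) x + cinner (W k y) y)
     \<le> (Re (cinner x x) + Re (cinner y y)) * max (w_e d X) (w_e d W)"
proof -
  have "tuple_norm d (\<lambda>k. cinner (X k x) x + cinner (W k y) y)
      \<le> Re (cinner x x) * w_e d X + Re (cinner y y) * w_e d W"
    by (intro order_trans[OF tuple_norm_add] add_mono tuple_norm_cinner_le_w_e homogeneous bounded_forms_of_tuples)
  also have "\<dots> \<le> (Re (cinner x x) + Re (cinner y y)) * max (w_e d X) (w_e d W)"
    using cinner_ge_zero[of x] cinner_ge_zero[of y] by (simp add: distrib_right add_mono mult_left_mono)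
  finally show ?thesis .
qed

lemma w_e_block_le:
  "w_e_block d X Y Z W \<le> max (w_e d X) (w_e d W) + w_e d half_sum + w_e d half_diff"
  unfolding w_e_block_def
proof (rule joint_numrad_least)
  let ?M = "max (w_e d X) (w_e d W)"
  have "0 \<le> w_e d X" "0 \<le> w_e d half_sum" "0 \<le> w_e d half_diff"
    unfolding w_e_def using bounded_forms_of_tuples by (simp_all add: joint_numrad_nonneg)
  then show "0 \<le> ?M + w_e d half_sum + w_e d half_diff"
    by (simp add: le_max_iff_disj)
  fix p :: "'a \<times> 'a" assume unit: "dsum_inner p p = 1"
  obtain x y where p: "p = (x, y)" by fastforce
  have norms: "Re (cinner x x) + Re (cinner y y) = 1"
    using unit by (simp add: p dsum_inner_def complex_eq_iff)
  let ?iy = "scaleC \<i> y"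
  have "tuple_norm d (\<lambda>k. dsum_inner (blockop X Y Z W k p) p)
      = tuple_norm d (\<lambda>k. (cinner (X k x) x + cinner (W k y) y)
          + (1/2 * (cinner (half_sum k (x + y)) (x + y) - cinner (half_sum k (x - y)) (x - y))
             + \<i>/2 * (cinner (half_diff k (x + ?iy)) (x + ?iy) - cinner (half_diff k (x - ?iy)) (x - ?iy))))"
    unfolding p by (rule tuple_norm_cong) (erule block_form_polarization)
  also have "\<dots> \<le> tuple_norm d (\<lambda>k. cinner (X k x) x + cinner (W k y) y)
      + (tuple_norm d (\<lambda>k. 1/2 * (cinner (half_sum k (x + y)) (x + y) - cinner (half_sum k (x - y)) (x - y)))
         + tuple_norm d (\<lambda>k. \<i>/2 * (cinner (half_diff k (x + ?iy)) (x + ?iy) - cinner (half_diff k (x - ?iy)) (x - ?iy))))"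
    by (intro order_trans[OF tuple_norm_add] add_left_mono tuple_norm_add)
  also have "\<dots> \<le> (Re (cinner x x) + Re (cinner y y)) * ?M
      + (1/2 * (2 * (Re (cinner x x) + Re (cinner y y)) * w_e d half_sum)
         + 1/2 * (2 * (Re (cinner x x) + Re (cinner y y)) * w_e d half_diff))"
  proof (intro add_mono)
    show "tuple_norm d (\<lambda>k. cinner (X k x) x + cinner (W k y) y) \<le> (Re (cinner x x) + Re (cinner y y)) * ?M"
      by (rule diagonal_forms_le)
    show "tuple_norm d (\<lambda>k. 1/2 * (cinner (half_sum k (x + y)) (x + y) - cinner (half_sum k (x - y)) (x - y)))
        \<le> 1/2 * (2 * (Re (cinner x x) + Re (cinner y y)) * w_e d half_sum)"
      using tuple_norm_form_diff_le[OF homogeneous(3) bounded_forms_of_tuples(3), of "1/2" "x + y" "x - y"]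
      by (simp add: cinner_parallelogram)
    show "tuple_norm d (\<lambda>k. \<i>/2 * (cinner (half_diff k (x + ?iy)) (x + ?iy) - cinner (half_diff k (x - ?iy)) (x - ?iy)))
        \<le> 1/2 * (2 * (Re (cinner x x) + Re (cinner y y)) * w_e d half_diff)"
      using tuple_norm_form_diff_le[OF homogeneous(4) bounded_forms_of_tuples(4), of "\<i>/2" "x + ?iy" "x - ?iy"]
      by (simp add: cinner_parallelogram cinner_simps norm_divide)
  qed
  also have "\<dots> = ?M + w_e d half_sum + w_e d half_diff"
    using norms by simp
  finally show "tuple_norm d (\<lambda>k. dsum_inner (blockop X Y Z W k p) p) \<le> ?M + w_e d half_sum + w_e d half_diff" .
qed

end

theorem mainTheorem18:
  fixes X Y Z W :: "nat \<Rightarrow> 'a::complex_hilbert \<Rightarrow> 'a" and d :: nat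
  assumes "1 \<le> d"
    and "\<forall>k<d. bounded_op (X k) \<and> bounded_op (Y k) \<and> bounded_op (Z k) \<and> bounded_op (W k)"
  shows "(max (w_e d X) (max (w_e d W) (max (w_e d (tscale (1/2) (tadd Y Z)))
            (w_e d (tscale (1/2) (tsub Y Z))))) \<le> w_e_block d X Y Z W)
    \<and> (w_e_block d X Y Z W \<le> max (w_e d X) (w_e d W)
            + w_e d (tscale (1/2) (tadd Y Z)) + w_e d (tscale (1/2) (tsub Y Z)))"
proof -
  interpret bounded_block d X Y Z W
    using assms(2) by unfold_locales simp_all
  show ?thesis
    using w_e_le_w_e_block w_e_block_le by simp
qed

end
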